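(* Let $r\ge1$, $n$ be integers and let $\sigma:\mathbb{Z}_n\to\{0,1\}$ be a weakly stable configuration. Then every block $[i,j]\in B(\sigma)$ has length $|[i,j]|\le r$.
   Context: Cells are elements of $\mathbb{Z}_n$, arithmetic mod $n$; $[a,b]$ denotes the cyclic interval $a,\dots,b$. The majority rule with radius $r$: $\mathrm{maj}_r(\sigma)(i)=0$ if among the cells of $[i-r,i+r]$ strictly more have value $0$ than $1$ under $\sigma$, and $=1$ otherwise. $\sigma$ is temporally periodic if $\mathrm{maj}_r(\mathrm{maj}_r(\sigma))=\sigma$. For $\beta\in\{0,1\}$, $B^\beta(\sigma)$ is the set of cell intervals $[i,j]$ with $\sigma(k)=\beta$ for all $k\in[i,j]$ and $\sigma(i-1)=\sigma(j+1)=1-\beta$; $B(\sigma)=B^0(\sigma)\cup B^1(\sigma)$. A configuration is strongly stable if every block in $B(\sigma)$ has length at least $r+1$ (equivalently, it has the form $(0^{r+1}0^*+1^{r+1}1^* )^*$), and weakly stable if it is temporally periodic and not strongly stable. *)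

theory Defs
  imports Main
begin

text \<open>Configurations on Z_n: a function sigma :: int => bool, read modulo n
  (True = state 1, False = state 0). Cell i of Z_n has value sigma (i mod n).\<close>

definition cval :: "int \<Rightarrow> (int \<Rightarrow> bool) \<Rightarrow> int \<Rightarrow> bool" where
  "cval n \<sigma> i = \<sigma> (i mod n)"

definition ones_in :: "nat \<Rightarrow> int \<Rightarrow> (int \<Rightarrow> bool) \<Rightarrow> int \<Rightarrow> nat" where
  "ones_in r n \<sigma> i = card {k \<in> {- int r .. int r}. cval n \<sigma> (i + k)}"

definition zeros_in :: "nat \<Rightarrow> int \<Rightarrow> (int \<Rightarrow> bool) \<Rightarrow> int \<Rightarrow> nat" where
  "zeros_in r n \<sigma> i = card {k \<in> {- int r .. int r}. \<not> cval n \<sigma> (i + k)}"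

definition maj :: "nat \<Rightarrow> int \<Rightarrow> (int \<Rightarrow> bool) \<Rightarrow> (int \<Rightarrow> bool)" where
  "maj r n \<sigma> = (\<lambda>i. \<not> (zeros_in r n \<sigma> i > ones_in r n \<sigma> i))"

definition temporally_periodic :: "nat \<Rightarrow> int \<Rightarrow> (int \<Rightarrow> bool) \<Rightarrow> bool" where
  "temporally_periodic r n \<sigma> \<longleftrightarrow>
     (\<forall>i \<in> {0..<n}. cval n (maj r n (maj r n \<sigma>)) i = cval n \<sigma> i)"

definition cyc_interval :: "int \<Rightarrow> int \<Rightarrow> int \<Rightarrow> int set" where
  "cyc_interval n i j = {(i + t) mod n | t. 0 \<le> t \<and> t \<le> (j - i) mod n}"

definition cyc_len :: "int \<Rightarrow> int \<Rightarrow> int \<Rightarrow> int" where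
  "cyc_len n i j = (j - i) mod n + 1"

definition blocks_of :: "int \<Rightarrow> (int \<Rightarrow> bool) \<Rightarrow> bool \<Rightarrow> (int \<times> int) set" where
  "blocks_of n \<sigma> \<beta> = {(i, j). i \<in> {0..<n} \<and> j \<in> {0..<n} \<and>
       (\<forall>k \<in> cyc_interval n i j. cval n \<sigma> k = \<beta>) \<and>
       cval n \<sigma> (i - 1) = (\<not> \<beta>) \<and> cval n \<sigma> (j + 1) = (\<not> \<beta>)}"

definition blocks :: "int \<Rightarrow> (int \<Rightarrow> bool) \<Rightarrow> (int \<times> int) set" where
  "blocks n \<sigma> = blocks_of n \<sigma> False \<union> blocks_of n \<sigma> True"

definition strongly_stable :: "nat \<Rightarrow> int \<Rightarrow> (int \<Rightarrow> bool) \<Rightarrow> bool" where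
  "strongly_stable r n \<sigma> \<longleftrightarrow> (\<forall>(i, j) \<in> blocks n \<sigma>. cyc_len n i j \<ge> int r + 1)"

definition weakly_stable :: "nat \<Rightarrow> int \<Rightarrow> (int \<Rightarrow> bool) \<Rightarrow> bool" where
  "weakly_stable r n \<sigma> \<longleftrightarrow> temporally_periodic r n \<sigma> \<and> \<not> strongly_stable r n \<sigma>"

end

theory Submission
  imports Defs
begin

text \<open>Lift a configuration on Z_n to the n-periodic configuration on the integer line.
  If a run of r+1 equal cells is followed by a cell of the other colour, then that cell
  starts another run of r+1 equal cells: otherwise one cell of that colour among the next r
  already makes the majority rule produce the old colour on r+1 consecutive cells, and a second
  application turns the changed cell back, contradicting temporal periodicity. Hence a single
  block of length at least r+1 propagates: every cell lies in a monochromatic run of r+1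
  cells, which forces every block to have length at least r+1, i.e. strong stability.\<close>

definition maj_int :: "nat \<Rightarrow> (int \<Rightarrow> bool) \<Rightarrow> int \<Rightarrow> bool" where
  "maj_int r f i \<longleftrightarrow>
     \<not> card {k \<in> {- int r .. int r}. \<not> f (i + k)} > card {k \<in> {- int r .. int r}. f (i + k)}"

definition in_long_run :: "nat \<Rightarrow> (int \<Rightarrow> bool) \<Rightarrow> int \<Rightarrow> bool" where
  "in_long_run r f x \<longleftrightarrow>
     (\<exists>w. w \<le> x \<and> x \<le> w + int r \<and> (\<forall>y \<in> {w .. w + int r}. f y = f x))"

lemma card_filter_add_card_filter_not:
  "finite A \<Longrightarrow> card {x \<in> A. P x} + card {x \<in> A. \<not> P x} = card A"
  by (subst card_Un_disjoint[symmetric]) (auto intro: arg_cong[where f = card])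

lemma maj_int_eqI:
  assumes "S \<subseteq> {- int r .. int r}" and "card S \<ge> r + 1" and "\<forall>k \<in> S. f (i + k) = c"
  shows "maj_int r f i = c"
proof -
  define W where "W = {- int r .. int r}"
  have finite: "finite {k \<in> W. P k}" for P by (rule finite_subset[of _ W]) (auto simp: W_def)
  have total: "card {k \<in> W. f (i + k)} + card {k \<in> W. \<not> f (i + k)} = 2 * r + 1"
    using card_filter_add_card_filter_not[of W] by (simp add: W_def)
  show ?thesis
  proof (cases c)
    case True
    then have "S \<subseteq> {k \<in> W. f (i + k)}" using assms(1,3) by (auto simp: W_def)
    then have "card S \<le> card {k \<in> W. f (i + k)}" by (rule card_mono[OF finite])
    then show ?thesis using total assms(2) True by (simp add: maj_int_def W_def)
  next
    case False
    then have "S \<subseteq> {k \<in> W. \<not> f (i + k)}" using assms(1,3) by (auto simp: W_def)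
    then have "card S \<le> card {k \<in> W. \<not> f (i + k)}" by (rule card_mono[OF finite])
    then show ?thesis using total assms(2) False by (simp add: maj_int_def W_def)
  qed
qed

lemma maj_int_const_on_run:
  assumes "\<forall>y \<in> {w .. w + int r}. f y = c" and "w \<le> i" and "i \<le> w + int r"
  shows "maj_int r f i = c"
  by (rule maj_int_eqI[where S = "{w - i .. w - i + int r}"]) (use assms in auto)

lemma run_after_colour_change:
  assumes fixpoint: "maj_int r (maj_int r f) = f"
    and run: "\<forall>x \<in> {x0 - int r - 1 .. x0 - 1}. f x = c" and change: "f x0 = (\<not> c)"
  shows "\<forall>x \<in> {x0 .. x0 + int r}. f x = (\<not> c)"
proof (rule ccontr)
  assume "\<not> ?thesis"
  then obtain y where y: "y \<in> {x0 .. x0 + int r}" "f y = c" by auto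
  have "maj_int r f x = c" if "x \<in> {x0 - int r - 1 .. x0 - 1}" for x
    using maj_int_const_on_run[of "x0 - int r - 1" r f c x] run that by auto
  moreover have "maj_int r f x0 = c"
    \<comment> \<open>the r cells left of x0 together with y outvote the rest of the window\<close>
  proof (rule maj_int_eqI[where S = "insert (y - x0) {- int r .. -1}"])
    have "y - x0 \<notin> {- int r .. -1}" using y by auto
    then show "r + 1 \<le> card (insert (y - x0) {- int r .. -1})" by simp
  qed (use y run in auto)
  moreover have "{x0 - int r .. x0} \<subseteq> insert x0 {x0 - int r - 1 .. x0 - 1}" by auto
  ultimately have "\<forall>x \<in> {x0 - int r .. x0}. maj_int r f x = c" by blast
  then have "maj_int r (maj_int r f) x0 = c"
    using maj_int_const_on_run[of "x0 - int r" r "maj_int r f" c x0] by simp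
  with fixpoint change show False by simp
qed

lemma in_long_runI:
  assumes "w \<le> x" and "x \<le> w + int r" and "\<And>y. y \<in> {w .. w + int r} \<Longrightarrow> f y = f x"
  shows "in_long_run r f x"
  using assms unfolding in_long_run_def by blast

lemma in_long_run_succ:
  assumes fixpoint: "maj_int r (maj_int r f) = f" and "in_long_run r f (x - 1)"
  shows "in_long_run r f x"
proof -
  obtain w c where w: "w \<le> x - 1" "x - 1 \<le> w + int r"
    and run: "\<forall>y \<in> {w .. w + int r}. f y = c" and "f (x - 1) = c"
    using assms(2) unfolding in_long_run_def by blast
  consider "x \<le> w + int r" | "w = x - 1 - int r" "f x = c" | "w = x - 1 - int r" "f x = (\<not> c)"
    using w by fastforce
  then show ?thesis
  proof cases
    case 1
    show ?thesis by (rule in_long_runI[of w]) (use w 1 run in auto)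
  next
    case 2
    have same: "f y = f x" if "y \<in> {x - int r .. x - int r + int r}" for y
      using that 2 run by (cases "y = x") auto
    show ?thesis by (rule in_long_runI[where w = "x - int r"]) (simp, simp, erule same)
  next
    case 3
    have "{x - int r - 1 .. x - 1} = {w .. w + int r}" using 3(1) by simp
    with run have "\<forall>y \<in> {x - int r - 1 .. x - 1}. f y = c" by simp
    then have "\<forall>y \<in> {x .. x + int r}. f y = (\<not> c)"
      by (rule run_after_colour_change[OF fixpoint _ 3(2)])
    then show ?thesis using 3(2) by (intro in_long_runI[where w = x]) auto
  qed
qed

lemma in_long_run_upwards:
  assumes "maj_int r (maj_int r f) = f" and "in_long_run r f p" and "p \<le> x"
  shows "in_long_run r f x"
  using assms(3,2)
  by (induction x rule: int_ge_induct) (use in_long_run_succ[OF assms(1)] in fastforce)+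

lemma in_long_run_shift_period:
  assumes periodic: "\<And>y. f (y mod n) = f y" and "in_long_run r f (x + k * n)"
  shows "in_long_run r f x"
proof -
  have shift: "f (y + k * n) = f y" for y
    using periodic[of "y + k * n"] periodic[of y] by simp
  obtain w where w: "w \<le> x + k * n" "x + k * n \<le> w + int r"
    and run: "\<forall>y \<in> {w .. w + int r}. f y = f (x + k * n)"
    using assms(2) unfolding in_long_run_def by blast
  have same: "f y = f x" if "y \<in> {w - k * n .. w - k * n + int r}" for y
    using run[rule_format, of "y + k * n"] that by (simp add: shift)
  show ?thesis
    by (rule in_long_runI[where w = "w - k * n"]) (use w in linarith, use w in linarith, erule same)
qed

lemma in_long_run_everywhere:
  assumes "maj_int r (maj_int r f) = f" and "\<And>y. f (y mod n) = f y" and "n > 0"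
    and "in_long_run r f p"
  shows "in_long_run r f x"
proof -
  have "\<bar>p - x\<bar> \<le> \<bar>p - x\<bar> * n"
    using mult_left_mono[of 1 n "\<bar>p - x\<bar>"] \<open>n > 0\<close> by simp
  then have "p \<le> x + \<bar>p - x\<bar> * n" using abs_ge_self[of "p - x"] by linarith
  with assms(1,4) have "in_long_run r f (x + \<bar>p - x\<bar> * n)" by (rule in_long_run_upwards)
  with assms(2) show ?thesis by (rule in_long_run_shift_period)
qed

lemma cval_mod [simp]: "cval n \<sigma> (i mod n) = cval n \<sigma> i"
  by (simp add: cval_def)

lemma maj_eq_maj_int: "maj r n \<sigma> = maj_int r (cval n \<sigma>)"
  by (simp add: maj_def maj_int_def zeros_in_def ones_in_def fun_eq_iff)

lemma cval_maj_int:
  assumes "cval n f = f"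
  shows "cval n (maj_int r f) = maj_int r f"
proof -
  have "f (i mod n + k) = f (i + k)" for i k
    using fun_cong[OF assms] by (metis cval_def mod_add_left_eq)
  then show ?thesis by (simp add: cval_def[of n "maj_int r f"] maj_int_def fun_eq_iff)
qed

lemma temporally_periodic_imp_fixpoint:
  assumes "n > 0" and "temporally_periodic r n \<sigma>"
  shows "maj_int r (maj_int r (cval n \<sigma>)) = cval n \<sigma>"
proof
  fix x
  let ?f = "cval n \<sigma>"
  have "cval n ?f = ?f" by (simp add: cval_def fun_eq_iff)
  then have f_maj: "cval n (maj_int r ?f) = maj_int r ?f"
    and f_maj_maj: "cval n (maj_int r (maj_int r ?f)) = maj_int r (maj_int r ?f)"
    by (simp_all add: cval_maj_int)
  have "x mod n \<in> {0 ..< n}" using \<open>n > 0\<close> by simp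
  with assms(2) have "cval n (maj r n (maj r n \<sigma>)) (x mod n) = ?f (x mod n)"
    unfolding temporally_periodic_def by blast
  then have "cval n (maj_int r (maj_int r ?f)) x = ?f x" by (simp add: maj_eq_maj_int f_maj)
  then show "maj_int r (maj_int r ?f) x = ?f x" by (simp only: f_maj_maj)
qed

lemma blocks_of_inside:
  assumes "(i, j) \<in> blocks_of n \<sigma> \<beta>" and "0 \<le> t" and "t \<le> (j - i) mod n"
  shows "cval n \<sigma> (i + t) = \<beta>"
proof -
  have "(i + t) mod n \<in> cyc_interval n i j" using assms(2,3) unfolding cyc_interval_def by blast
  moreover have "\<forall>k \<in> cyc_interval n i j. cval n \<sigma> k = \<beta>"
    using assms(1) by (simp add: blocks_of_def)
  ultimately show ?thesis by (metis cval_mod)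
qed

lemma blocks_of_before: "(i, j) \<in> blocks_of n \<sigma> \<beta> \<Longrightarrow> cval n \<sigma> (i - 1) = (\<not> \<beta>)"
  by (simp add: blocks_of_def)

lemma blocks_of_after:
  assumes "(i, j) \<in> blocks_of n \<sigma> \<beta>"
  shows "cval n \<sigma> (i + (j - i) mod n + 1) = (\<not> \<beta>)"
proof -
  have "(i + 1 + (j - i) mod n) mod n = (i + 1 + (j - i)) mod n"
    by (rule mod_add_right_eq)
  then have "(i + (j - i) mod n + 1) mod n = (j + 1) mod n"
    by (simp add: ac_simps)
  then have "cval n \<sigma> (i + (j - i) mod n + 1) = cval n \<sigma> (j + 1)"
    by (metis cval_mod)
  then show ?thesis using assms by (simp add: blocks_of_def)
qed

lemma in_long_run_block_start_iff:
  assumes block: "(i, j) \<in> blocks_of n \<sigma> \<beta>" and "n > 0"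
  shows "in_long_run r (cval n \<sigma>) i \<longleftrightarrow> cyc_len n i j \<ge> int r + 1"
proof
  assume "in_long_run r (cval n \<sigma>) i"
  then obtain w c where w: "w \<le> i" "i \<le> w + int r"
    and run: "\<forall>y \<in> {w .. w + int r}. cval n \<sigma> y = c" and "cval n \<sigma> i = c"
    unfolding in_long_run_def by blast
  then have start: "c = \<beta>" using blocks_of_inside[OF block, of 0] \<open>n > 0\<close> by simp
  have "w = i"
  proof (rule ccontr)
    assume "w \<noteq> i"
    then have "cval n \<sigma> (i - 1) = c" using w run by auto
    then show False using start blocks_of_before[OF block] by simp
  qed
  show "cyc_len n i j \<ge> int r + 1"
  proof (rule ccontr)
    assume "\<not> ?thesis"
    moreover have "0 \<le> (j - i) mod n" using \<open>n > 0\<close> by simp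
    ultimately have "i + (j - i) mod n + 1 \<in> {w .. w + int r}"
      using \<open>w = i\<close> unfolding cyc_len_def by auto
    then show False using run start blocks_of_after[OF block] by auto
  qed
next
  assume "cyc_len n i j \<ge> int r + 1"
  then have "cval n \<sigma> y = \<beta>" if "y \<in> {i .. i + int r}" for y
    using blocks_of_inside[OF block, of "y - i"] that unfolding cyc_len_def by auto
  moreover have "cval n \<sigma> i = \<beta>" using blocks_of_inside[OF block, of 0] \<open>n > 0\<close> by simp
  ultimately show "in_long_run r (cval n \<sigma>) i" by (intro in_long_runI[where w = i]) auto
qed

theorem long_block_imp_strongly_stable:
  assumes "n > 0" and "temporally_periodic r n \<sigma>"
    and "(i, j) \<in> blocks n \<sigma>" and "cyc_len n i j \<ge> int r + 1"
  shows "strongly_stable r n \<sigma>"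
proof -
  from assms(3) obtain \<beta> where "(i, j) \<in> blocks_of n \<sigma> \<beta>" by (auto simp: blocks_def)
  then have "in_long_run r (cval n \<sigma>) i"
    using assms(1,4) by (simp add: in_long_run_block_start_iff)
  then have "in_long_run r (cval n \<sigma>) x" for x
    by (rule in_long_run_everywhere[OF temporally_periodic_imp_fixpoint[OF assms(1,2)] cval_mod
          assms(1)])
  then show ?thesis
    using in_long_run_block_start_iff[OF _ assms(1)] unfolding strongly_stable_def blocks_def
    by blast
qed

theorem corollary1:
  fixes r :: nat and n :: int and \<sigma> :: "int \<Rightarrow> bool"
  assumes "r \<ge> 1" and "n \<ge> 1"
    and "weakly_stable r n \<sigma>"
  shows "\<forall>(i, j) \<in> blocks n \<sigma>. cyc_len n i j \<le> int r"
proof (rule ccontr)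
  assume "\<not> ?thesis"
  then obtain i j where "(i, j) \<in> blocks n \<sigma>" and "cyc_len n i j \<ge> int r + 1" by auto
  moreover have "temporally_periodic r n \<sigma>" using assms(3) unfolding weakly_stable_def by simp
  ultimately have "strongly_stable r n \<sigma>"
    using assms(2) by (intro long_block_imp_strongly_stable) auto
  with assms(3) show False unfolding weakly_stable_def by simp
qed

end
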